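(* Let $G$ be a simple connected graph with $n$ vertices $v_1,\dots,v_n$ and $m$ edges, let $d_i$ denote the degree of $v_i$, and let $\Delta=\max_{1\le i\le n} d_i$. Then $$\rho_{ABC}(G)\le \sqrt{\Delta+\frac{2m-n+1}{\Delta}-2}.$$ Moreover, the bound is attainable, i.e., there exist connected graphs for which equality holds.
   Context: For a simple connected graph $G$ with vertex set $\{v_1,\dots,v_n\}$ and degrees $d_i$, the ABC matrix is $M(G)=(m_{ij})_{n\times n}$ with $m_{ij}=\sqrt{(d_i+d_j-2)/(d_id_j)}$ if $v_iv_j$ is an edge and $m_{ij}=0$ otherwise. The ABC spectral radius $\rho_{ABC}(G)$ is the largest eigenvalue of $M(G)$. *)

theory Defs
  imports Complex_Main
begin

definition simple_graph :: "'a set \<Rightarrow> ('a \<Rightarrow> 'a \<Rightarrow> bool) \<Rightarrow> bool" where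
  "simple_graph V E \<longleftrightarrow> finite V \<and>
     (\<forall>u v. E u v \<longrightarrow> u \<in> V \<and> v \<in> V) \<and>
     (\<forall>u v. E u v \<longrightarrow> E v u) \<and> (\<forall>u. \<not> E u u)"

definition connected_graph :: "'a set \<Rightarrow> ('a \<Rightarrow> 'a \<Rightarrow> bool) \<Rightarrow> bool" where
  "connected_graph V E \<longleftrightarrow> simple_graph V E \<and> V \<noteq> {} \<and>
     (\<forall>u\<in>V. \<forall>v\<in>V. E\<^sup>*\<^sup>* u v)"

definition degree :: "'a set \<Rightarrow> ('a \<Rightarrow> 'a \<Rightarrow> bool) \<Rightarrow> 'a \<Rightarrow> nat" where
  "degree V E v = card {u \<in> V. E v u}"

definition num_edges :: "'a set \<Rightarrow> ('a \<Rightarrow> 'a \<Rightarrow> bool) \<Rightarrow> nat" where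
  "num_edges V E = card {{u, v} | u v. u \<in> V \<and> v \<in> V \<and> E u v}"

definition max_degree :: "'a set \<Rightarrow> ('a \<Rightarrow> 'a \<Rightarrow> bool) \<Rightarrow> nat" where
  "max_degree V E = Max (degree V E ` V)"

definition ABC_matrix :: "'a set \<Rightarrow> ('a \<Rightarrow> 'a \<Rightarrow> bool) \<Rightarrow> 'a \<Rightarrow> 'a \<Rightarrow> real" where
  "ABC_matrix V E u v =
     (if E u v then
        sqrt ((real (degree V E u) + real (degree V E v) - 2) /
              (real (degree V E u) * real (degree V E v)))
      else 0)"

definition is_eigenvalue :: "'a set \<Rightarrow> ('a \<Rightarrow> 'a \<Rightarrow> real) \<Rightarrow> real \<Rightarrow> bool" where
  "is_eigenvalue V A mu \<longleftrightarrow> (\<exists>x :: 'a \<Rightarrow> real. (\<exists>i\<in>V. x i \<noteq> 0) \<and>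
      (\<forall>i\<in>V. (\<Sum>j\<in>V. A i j * x j) = mu * x i))"

text \<open>Largest eigenvalue (the ABC matrix is real symmetric, so all eigenvalues are real).\<close>
definition ABC_spectral_radius :: "'a set \<Rightarrow> ('a \<Rightarrow> 'a \<Rightarrow> bool) \<Rightarrow> real" where
  "ABC_spectral_radius V E = Max {mu. is_eigenvalue V (ABC_matrix V E) mu}"

end

theory Submission
  imports Defs "Jordan_Normal_Form.Spectral_Radius" "HOL-Analysis.Convex"
begin

text \<open>Cauchy-Schwarz on the row of u gives
  (mu x_u)^2 <= d_u * sum_{w~u} m_uw^2 x_w^2; summing over u and exchanging the two sums
  shows that mu^2 is at most the largest column sum sum_{u~w} d_u m_uw^2.
  For the ABC matrix d_u m_uw^2 = (d_u + d_w - 2) / d_w, so the column sum of w is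
  S_w / d_w + d_w - 2, where S_w, the sum of the degrees of the neighbours of w, is at most
  both d_w Delta and 2m - n + 1 (all other vertices have degree at least 1); for
  1 <= d_w <= Delta this is at most Delta + (2m - n + 1) / Delta - 2.
  The complete graph K_n attains the bound: the all-ones vector is an eigenvector for
  sqrt (2n - 4), which is also the value of the bound.\<close>

lemma eigenvalue_mat_reindex_iff:
  fixes M :: "'a \<Rightarrow> 'a \<Rightarrow> 'b::field"
  assumes f: "bij_betw f {..<n} V"
  shows "eigenvalue (mat n n (\<lambda>(i, j). M (f i) (f j))) mu \<longleftrightarrow>
    (\<exists>x. (\<exists>i\<in>V. x i \<noteq> 0) \<and> (\<forall>i\<in>V. (\<Sum>j\<in>V. M i j * x j) = mu * x i))"
proof -
  define A where "A = mat n n (\<lambda>(i, j). M (f i) (f j))"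
  define vec_of where "vec_of x = vec n (x \<circ> f)" for x :: "'a \<Rightarrow> 'b"
  have carrier: "carrier_vec n = range vec_of"
  proof (intro subset_antisym subsetI)
    fix v :: "'b vec" assume v: "v \<in> carrier_vec n"
    have "v = vec_of (\<lambda>u. v $ inv_into {..<n} f u)"
      using v f by (intro eq_vecI) (auto simp: vec_of_def bij_betw_inv_into_left)
    then show "v \<in> range vec_of" by blast
  qed (auto simp: vec_of_def)
  have nonzero: "vec_of x \<noteq> 0\<^sub>v n \<longleftrightarrow> (\<exists>i\<in>V. x i \<noteq> 0)" for x
    using f by (auto simp: vec_of_def vec_eq_iff bij_betw_def)
  have "(A *\<^sub>v vec_of x) $ i = (\<Sum>j\<in>V. M (f i) j * x j)" if "i < n" for x i
    using that sum.reindex_bij_betw[OF f, of "\<lambda>j. M (f i) j * x j"]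
    by (simp add: A_def vec_of_def scalar_prod_def lessThan_atLeast0)
  then have eq: "A *\<^sub>v vec_of x = mu \<cdot>\<^sub>v vec_of x \<longleftrightarrow> (\<forall>i\<in>V. (\<Sum>j\<in>V. M i j * x j) = mu * x i)" for x
    using f by (auto simp: vec_eq_iff vec_of_def A_def bij_betw_def)
  have "eigenvalue A mu \<longleftrightarrow> (\<exists>v\<in>range vec_of. v \<noteq> 0\<^sub>v n \<and> A *\<^sub>v v = mu \<cdot>\<^sub>v v)"
    unfolding eigenvalue_def eigenvector_def carrier[symmetric] by (auto simp: A_def)
  then show ?thesis
    unfolding A_def[symmetric] by (auto simp: nonzero eq)
qed

lemma finite_eigenvalues:
  assumes "finite V"
  shows "finite {mu. is_eigenvalue V M mu}"
proof -
  obtain f where f: "bij_betw f {..<card V} V"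
    using ex_bij_betw_nat_finite[OF assms] by (auto simp: lessThan_atLeast0)
  have "{mu. is_eigenvalue V M mu} = spectrum (mat (card V) (card V) (\<lambda>(i, j). M (f i) (f j)))"
    unfolding spectrum_def is_eigenvalue_def eigenvalue_mat_reindex_iff[OF f] by simp
  then show ?thesis
    using card_finite_spectrum(1) by (metis mat_carrier)
qed

lemma symmetric_eigenvalue_real:
  fixes M :: "'a \<Rightarrow> 'a \<Rightarrow> real"
  assumes "finite V" and sym: "\<And>i j. M i j = M j i"
    and nonzero: "\<exists>i\<in>V. z i \<noteq> 0"
    and ev: "\<forall>i\<in>V. (\<Sum>j\<in>V. of_real (M i j) * z j) = lam * z i"
  shows "Im lam = 0"
proof -
  txt \<open>The form \<open>Q = z\<^sup>* M z\<close> is \<open>lam |z|\<^sup>2\<close> and, M being real symmetric, its own conjugate.\<close>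
  define Q where "Q = (\<Sum>i\<in>V. \<Sum>j\<in>V. cnj (z i) * (of_real (M i j) * z j))"
  define R where "R = (\<Sum>i\<in>V. (cmod (z i))\<^sup>2)"
  have "Q = (\<Sum>i\<in>V. cnj (z i) * (lam * z i))"
    unfolding Q_def using ev by (intro sum.cong refl) (metis sum_distrib_left)
  also have "\<dots> = lam * of_real R"
    unfolding R_def of_real_sum sum_distrib_left
    by (intro sum.cong refl) (simp add: complex_norm_square mult.commute del: of_real_power)
  finally have Q_eq: "Q = lam * of_real R" .
  have "cnj Q = (\<Sum>i\<in>V. \<Sum>j\<in>V. cnj (z j) * (of_real (M j i) * z i))"
    unfolding Q_def cnj_sum by (intro sum.cong refl) (simp add: sym mult.commute mult.left_commute)
  also have "\<dots> = Q"
    unfolding Q_def by (rule sum.swap)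
  finally have "cnj lam * of_real R = lam * of_real R"
    using Q_eq by simp
  moreover have "R > 0"
  proof -
    obtain i where "i \<in> V" "z i \<noteq> 0" using nonzero by blast
    then have "(cmod (z i))\<^sup>2 \<le> R" "(cmod (z i))\<^sup>2 > 0"
      unfolding R_def using assms(1) by (auto intro: member_le_sum)
    then show ?thesis by linarith
  qed
  ultimately have "cnj lam = lam" by simp
  then show ?thesis by (simp add: complex_eq_iff)
qed

lemma symmetric_has_eigenvalue:
  fixes M :: "'a \<Rightarrow> 'a \<Rightarrow> real"
  assumes fin: "finite V" and "V \<noteq> {}" and sym: "\<And>i j. M i j = M j i"
  shows "\<exists>mu. is_eigenvalue V M mu"
proof -
  obtain f where f: "bij_betw f {..<card V} V"
    using ex_bij_betw_nat_finite[OF fin] by (auto simp: lessThan_atLeast0)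
  define A where "A = mat (card V) (card V) (\<lambda>(i, j). complex_of_real (M (f i) (f j)))"
  have "spectrum A \<noteq> {}"
    using assms(1,2) by (intro spectrum_non_empty[of _ "card V"]) (simp_all add: A_def card_gt_0_iff)
  then obtain lam where "eigenvalue A lam"
    unfolding spectrum_def by blast
  then obtain z where nonzero: "\<exists>i\<in>V. z i \<noteq> 0"
    and ev: "\<forall>i\<in>V. (\<Sum>j\<in>V. of_real (M i j) * z j) = lam * z i"
    using eigenvalue_mat_reindex_iff[OF f, of "\<lambda>i j. complex_of_real (M i j)" lam]
    unfolding A_def by blast
  have "Im lam = 0"
    using symmetric_eigenvalue_real[OF fin sym nonzero ev] .
  have re: "(\<Sum>j\<in>V. M i j * Re (z j)) = Re lam * Re (z i)"
    and im: "(\<Sum>j\<in>V. M i j * Im (z j)) = Re lam * Im (z i)" if "i \<in> V" for i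
  proof -
    have "(\<Sum>j\<in>V. of_real (M i j) * z j) = lam * z i"
      using ev that by blast
    from arg_cong[OF this, of Re] arg_cong[OF this, of Im]
    show "(\<Sum>j\<in>V. M i j * Re (z j)) = Re lam * Re (z i)"
      and "(\<Sum>j\<in>V. M i j * Im (z j)) = Re lam * Im (z i)"
      using \<open>Im lam = 0\<close> by simp_all
  qed
  obtain i where "i \<in> V" and "Re (z i) \<noteq> 0 \<or> Im (z i) \<noteq> 0"
    using nonzero by (auto simp: complex_eq_iff)
  have eigenvector: "is_eigenvalue V M (Re lam)"
    if "\<And>i. i \<in> V \<Longrightarrow> (\<Sum>j\<in>V. M i j * x j) = Re lam * x i" and "x i \<noteq> 0" for x
    unfolding is_eigenvalue_def using that \<open>i \<in> V\<close> by blast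
  show ?thesis
    using eigenvector[of "\<lambda>j. Re (z j)"] eigenvector[of "\<lambda>j. Im (z j)"] re im
      \<open>Re (z i) \<noteq> 0 \<or> Im (z i) \<noteq> 0\<close> by blast
qed

lemma is_eigenvalue_square_le:
  fixes M :: "'a \<Rightarrow> 'a \<Rightarrow> real"
  assumes fin: "finite V"
    and support: "\<And>u w. u \<in> V \<Longrightarrow> w \<in> V \<Longrightarrow> M u w \<noteq> 0 \<Longrightarrow> E u w"
    and column: "\<And>w. w \<in> V \<Longrightarrow> (\<Sum>u\<in>{u\<in>V. E u w}. real (Defs.degree V E u) * (M u w)\<^sup>2) \<le> B"
    and "is_eigenvalue V M mu"
  shows "mu\<^sup>2 \<le> B"
proof -
  obtain x where nonzero: "\<exists>i\<in>V. x i \<noteq> 0"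
    and ev: "\<And>i. i \<in> V \<Longrightarrow> (\<Sum>j\<in>V. M i j * x j) = mu * x i"
    using \<open>is_eigenvalue V M mu\<close> unfolding is_eigenvalue_def by blast
  define N where "N u = {w\<in>V. E u w}" for u
  have row: "(mu * x u)\<^sup>2 \<le> (\<Sum>w\<in>N u. real (Defs.degree V E u) * (M u w)\<^sup>2 * (x w)\<^sup>2)"
    if "u \<in> V" for u
  proof -
    have "(\<Sum>j\<in>V. M u j * x j) = (\<Sum>w\<in>N u. M u w * x w)"
      unfolding N_def using fin support[OF that] by (intro sum.mono_neutral_right) auto
    then have "(mu * x u)\<^sup>2 = (\<Sum>w\<in>N u. M u w * x w)\<^sup>2"
      using ev[OF that] by simp
    also have "\<dots> \<le> (\<Sum>w\<in>N u. (M u w * x w)\<^sup>2) * card (N u)"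
      by (rule sum_squared_le_sum_of_squares)
    finally show ?thesis
      by (simp add: N_def Defs.degree_def sum_distrib_left power_mult_distrib mult.commute mult.left_commute)
  qed
  have "mu\<^sup>2 * (\<Sum>u\<in>V. (x u)\<^sup>2) = (\<Sum>u\<in>V. (mu * x u)\<^sup>2)"
    by (simp add: sum_distrib_left power_mult_distrib)
  also have "\<dots> \<le> (\<Sum>u\<in>V. \<Sum>w\<in>N u. real (Defs.degree V E u) * (M u w)\<^sup>2 * (x w)\<^sup>2)"
    using row by (rule sum_mono)
  also have "\<dots> = (\<Sum>w\<in>V. \<Sum>u\<in>{u\<in>V. E u w}. real (Defs.degree V E u) * (M u w)\<^sup>2 * (x w)\<^sup>2)"
    unfolding N_def by (rule sum.swap_restrict[OF fin fin])
  also have "\<dots> = (\<Sum>w\<in>V. (\<Sum>u\<in>{u\<in>V. E u w}. real (Defs.degree V E u) * (M u w)\<^sup>2) * (x w)\<^sup>2)"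
    by (simp only: sum_distrib_right)
  also have "\<dots> \<le> (\<Sum>w\<in>V. B * (x w)\<^sup>2)"
    using column by (intro sum_mono mult_right_mono) auto
  finally have "mu\<^sup>2 * (\<Sum>u\<in>V. (x u)\<^sup>2) \<le> B * (\<Sum>u\<in>V. (x u)\<^sup>2)"
    by (simp add: sum_distrib_left)
  moreover have "(\<Sum>u\<in>V. (x u)\<^sup>2) > 0"
    using nonzero fin by (auto intro: sum_pos2)
  ultimately show ?thesis by simp
qed

lemma sum_degree_eq_twice_num_edges:
  assumes g: "simple_graph V E"
  shows "(\<Sum>u\<in>V. Defs.degree V E u) = 2 * num_edges V E"
proof -
  have fin: "finite V" and sym: "\<And>u v. E u v \<Longrightarrow> E v u" and irr: "\<And>u. \<not> E u u"
    using g unfolding simple_graph_def by auto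
  define P where "P = Sigma V (\<lambda>u. {v \<in> V. E u v})"
  define Ed where "Ed = {{u, v} | u v. u \<in> V \<and> v \<in> V \<and> E u v}"
  define h where "h = (\<lambda>p::'a \<times> 'a. {fst p, snd p})"
  have memP: "\<And>a b. (a, b) \<in> P \<longleftrightarrow> a \<in> V \<and> b \<in> V \<and> E a b"
    unfolding P_def by simp
  have finP: "finite P" unfolding P_def using fin by simp
  have cardP: "card P = (\<Sum>u\<in>V. Defs.degree V E u)"
    unfolding P_def Defs.degree_def using fin by simp
  have EdP: "Ed = h ` P"
  proof (intro subset_antisym subsetI)
    fix e assume "e \<in> Ed"
    then obtain u v where "e = h (u, v)" "(u, v) \<in> P"
      unfolding Ed_def h_def memP by auto
    then show "e \<in> h ` P" by blast
  next
    fix e assume "e \<in> h ` P"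
    then show "e \<in> Ed"
      unfolding Ed_def h_def P_def by force
  qed
  have "card {p \<in> P. h p = e} = 2" if "e \<in> Ed" for e
  proof -
    from that obtain u v where uv: "e = {u, v}" "u \<in> V" "v \<in> V" "E u v"
      unfolding Ed_def by blast
    then have "{p \<in> P. h p = e} = {(u, v), (v, u)}"
      using sym by (auto simp: memP h_def doubleton_eq_iff)
    then show ?thesis using uv irr by (metis card_2_iff prod.inject)
  qed
  moreover have "card P = (\<Sum>e\<in>Ed. card {p \<in> P. h p = e})"
    using sum.group[OF finP, of Ed h "\<lambda>_. 1::nat"] EdP finP by (simp only: card_eq_sum) auto
  ultimately have "card P = 2 * card Ed" by simp
  then show ?thesis unfolding num_edges_def Ed_def using cardP by simp
qed

lemma degree_ge_1:
  assumes "connected_graph V E" and "card V \<ge> 2" and "u \<in> V"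
  shows "Defs.degree V E u \<ge> 1"
proof -
  have fin: "finite V" and inV: "\<And>u v. E u v \<Longrightarrow> u \<in> V \<and> v \<in> V"
    and reach: "\<And>v. v \<in> V \<Longrightarrow> E\<^sup>*\<^sup>* u v"
    using assms unfolding connected_graph_def simple_graph_def by auto
  have "\<not> card V \<le> Suc 0"
    using assms(2) by simp
  then obtain v where "v \<in> V" "v \<noteq> u"
    using card_le_Suc0_iff_eq[OF fin] by blast
  then obtain w where "E u w"
    using reach by (metis converse_rtranclpE)
  then have "{w \<in> V. E u w} \<noteq> {}"
    using inV by blast
  then show ?thesis
    unfolding Defs.degree_def using fin by (simp add: Suc_le_eq card_gt_0_iff)
qed

lemma sum_neighbour_degrees_le:
  assumes g: "simple_graph V E" and pos: "\<And>u. u \<in> V \<Longrightarrow> Defs.degree V E u \<ge> 1"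
    and w: "w \<in> V"
  shows "(\<Sum>u\<in>{u\<in>V. E w u}. real (Defs.degree V E u))
    \<le> 2 * real (num_edges V E) - real (card V) + 1"
proof -
  define N where "N = {u\<in>V. E w u}"
  define R where "R = V - N - {w}"
  define d where "d u = real (Defs.degree V E u)" for u
  have fin: "finite V" and "\<not> E w w"
    using g unfolding simple_graph_def by auto
  then have N: "N \<subseteq> V" "w \<in> V - N"
    unfolding N_def using w by auto
  have split: "(\<Sum>u\<in>V. f u) = (\<Sum>u\<in>N. f u) + f w + (\<Sum>u\<in>R. f u)" for f :: "'a \<Rightarrow> real"
    unfolding R_def using fin N by (simp add: sum.subset_diff[OF N(1) fin] sum.remove)
  have "2 * real (num_edges V E) = real (\<Sum>u\<in>V. Defs.degree V E u)"
    unfolding sum_degree_eq_twice_num_edges[OF g] by simp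
  also have "\<dots> = (\<Sum>u\<in>V. d u)"
    unfolding d_def by simp
  also have "\<dots> = (\<Sum>u\<in>N. d u) + card N + (\<Sum>u\<in>R. d u)"
    unfolding split[of d] by (simp add: d_def N_def Defs.degree_def)
  finally have "(\<Sum>u\<in>N. d u) = 2 * real (num_edges V E) - card N - (\<Sum>u\<in>R. d u)"
    by simp
  moreover have "(\<Sum>u\<in>R. 1) \<le> (\<Sum>u\<in>R. d u)"
    using pos unfolding d_def R_def by (intro sum_mono) auto
  moreover have "real (card V) = real (card N) + 1 + (\<Sum>u\<in>R. 1)"
    using split[of "\<lambda>_. 1"] by simp
  ultimately show ?thesis
    unfolding N_def d_def by linarith
qed

lemma divide_add_le_divide_add:
  fixes S t D K :: real
  assumes "0 < t" "t \<le> D" "S \<le> K" "S \<le> t * D"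
  shows "S / t + t \<le> D + K / D"
proof (cases "K \<le> t * D")
  case True
  have "S / t \<le> K / t"
    using assms by (simp add: divide_right_mono)
  moreover have "K / t + t - (D + K / D) = (D - t) * (K - t * D) / (t * D)"
    using assms by (simp add: field_simps)
  moreover have "(D - t) * (K - t * D) / (t * D) \<le> 0"
    using True assms by (intro divide_nonpos_pos mult_nonneg_nonpos) auto
  ultimately show ?thesis by linarith
next
  case False
  have "S / t \<le> D"
    using assms by (simp add: divide_le_eq mult.commute)
  moreover have "t \<le> K / D"
    using False assms by (simp add: le_divide_eq)
  ultimately show ?thesis by linarith
qed

lemma degree_mult_ABC_matrix_square:
  assumes "E u w" and "Defs.degree V E u \<ge> 1" and "Defs.degree V E w \<ge> 1"
  shows "real (Defs.degree V E u) * (ABC_matrix V E u w)\<^sup>2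
    = (real (Defs.degree V E u) + real (Defs.degree V E w) - 2) / real (Defs.degree V E w)"
proof -
  have "(ABC_matrix V E u w)\<^sup>2
      = (real (Defs.degree V E u) + real (Defs.degree V E w) - 2)
        / (real (Defs.degree V E u) * real (Defs.degree V E w))"
    using assms by (simp add: ABC_matrix_def)
  then show ?thesis
    using assms(2,3) by (simp add: field_simps)
qed

definition ABC_bound_sq :: "'a set \<Rightarrow> ('a \<Rightarrow> 'a \<Rightarrow> bool) \<Rightarrow> real" where
  "ABC_bound_sq V E =
     real (max_degree V E) + (2 * real (num_edges V E) - real (card V) + 1) / real (max_degree V E) - 2"

lemma ABC_column_sum_le:
  assumes c: "connected_graph V E" and n2: "card V \<ge> 2" and w: "w \<in> V"
  shows "(\<Sum>u\<in>{u\<in>V. E u w}. real (Defs.degree V E u) * (ABC_matrix V E u w)\<^sup>2)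
    \<le> ABC_bound_sq V E"
proof -
  define d where "d u = real (Defs.degree V E u)" for u
  define D where "D = real (max_degree V E)"
  define N where "N = {u\<in>V. E w u}"
  define S where "S = (\<Sum>u\<in>N. d u)"
  have g: "simple_graph V E" and fin: "finite V"
    using c unfolding connected_graph_def simple_graph_def by auto
  have column: "{u\<in>V. E u w} = N"
    unfolding N_def using g unfolding simple_graph_def by auto
  have pos: "d u \<ge> 1" if "u \<in> V" for u
    unfolding d_def using degree_ge_1[OF c n2 that] by simp
  have le_D: "d u \<le> D" if "u \<in> V" for u
    unfolding d_def D_def max_degree_def using fin that by simp
  have card_N: "real (card N) = d w"
    unfolding N_def d_def Defs.degree_def ..
  have "d u * (ABC_matrix V E u w)\<^sup>2 = (d u + (d w - 2)) / d w" if "u \<in> N" for u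
  proof -
    have "E u w" "u \<in> V"
      using that g unfolding N_def simple_graph_def by auto
    then show ?thesis
      using degree_mult_ABC_matrix_square[OF \<open>E u w\<close> degree_ge_1[OF c n2] degree_ge_1[OF c n2 w]]
      unfolding d_def by (simp add: add_diff_eq)
  qed
  then have "(\<Sum>u\<in>N. d u * (ABC_matrix V E u w)\<^sup>2) = (\<Sum>u\<in>N. (d u + (d w - 2)) / d w)"
    by (rule sum.cong[OF refl])
  also have "\<dots> = (S + d w * (d w - 2)) / d w"
    unfolding sum_divide_distrib[symmetric] sum.distrib S_def by (simp add: card_N)
  also have "\<dots> = S / d w + d w - 2"
    using pos[OF w] by (simp add: field_simps)
  also have "\<dots> \<le> D + (2 * real (num_edges V E) - real (card V) + 1) / D - 2"
  proof -
    have "S \<le> (\<Sum>u\<in>N. D)"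
      unfolding S_def N_def using le_D by (intro sum_mono) auto
    then have "S \<le> d w * D"
      by (simp add: card_N)
    moreover have "S \<le> 2 * real (num_edges V E) - real (card V) + 1"
      unfolding S_def N_def d_def using sum_neighbour_degrees_le[OF g degree_ge_1[OF c n2] w] .
    ultimately show ?thesis
      using divide_add_le_divide_add pos[OF w] le_D[OF w] by fastforce
  qed
  finally show ?thesis
    unfolding column d_def D_def ABC_bound_sq_def .
qed

lemma is_eigenvalue_ABC_matrix_le:
  assumes "connected_graph V E" and "card V \<ge> 2" and "is_eigenvalue V (ABC_matrix V E) mu"
  shows "mu \<le> sqrt (ABC_bound_sq V E)"
proof -
  have "mu\<^sup>2 \<le> ABC_bound_sq V E"
  proof (rule is_eigenvalue_square_le[where E = E])
    show "finite V"
      using assms(1) unfolding connected_graph_def simple_graph_def by simp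
    show "E u w" if "ABC_matrix V E u w \<noteq> 0" for u w
      using that unfolding ABC_matrix_def by (simp split: if_splits)
    show "(\<Sum>u\<in>{u\<in>V. E u w}. real (Defs.degree V E u) * (ABC_matrix V E u w)\<^sup>2)
      \<le> ABC_bound_sq V E" if "w \<in> V" for w
      using ABC_column_sum_le[OF assms(1,2) that] .
  qed (rule assms(3))
  then have "sqrt (mu\<^sup>2) \<le> sqrt (ABC_bound_sq V E)"
    by (rule real_sqrt_le_mono)
  then show ?thesis
    by (simp add: abs_le_iff)
qed

lemma ABC_matrix_symmetric:
  assumes "simple_graph V E"
  shows "ABC_matrix V E u v = ABC_matrix V E v u"
  using assms unfolding ABC_matrix_def simple_graph_def by (auto simp: ac_simps)

lemma eigenvalues_ABC_matrix:
  assumes "simple_graph V E"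
  shows "finite {mu. is_eigenvalue V (ABC_matrix V E) mu}"
    and "V \<noteq> {} \<Longrightarrow> {mu. is_eigenvalue V (ABC_matrix V E) mu} \<noteq> {}"
proof -
  have fin: "finite V"
    using assms unfolding simple_graph_def by simp
  show "finite {mu. is_eigenvalue V (ABC_matrix V E) mu}"
    using finite_eigenvalues[OF fin] .
  show "{mu. is_eigenvalue V (ABC_matrix V E) mu} \<noteq> {}" if "V \<noteq> {}"
    using symmetric_has_eigenvalue[OF fin that, of "ABC_matrix V E"] ABC_matrix_symmetric[OF assms]
    by simp
qed

lemma ABC_spectral_radius_le:
  assumes "connected_graph V E" and "card V \<ge> 2"
  shows "ABC_spectral_radius V E \<le> sqrt (ABC_bound_sq V E)"
proof -
  have "simple_graph V E" and "V \<noteq> {}"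
    using assms(1) unfolding connected_graph_def by auto
  then have "ABC_spectral_radius V E \<in> {mu. is_eigenvalue V (ABC_matrix V E) mu}"
    unfolding ABC_spectral_radius_def by (intro Max_in eigenvalues_ABC_matrix)
  then show ?thesis
    using is_eigenvalue_ABC_matrix_le[OF assms] by simp
qed

definition complete_graph :: "nat \<Rightarrow> nat \<Rightarrow> nat \<Rightarrow> bool" where
  "complete_graph n a b \<longleftrightarrow> a < n \<and> b < n \<and> a \<noteq> b"

lemma connected_complete_graph:
  assumes "n \<ge> 1"
  shows "connected_graph {..<n} (complete_graph n)"
proof -
  have "(complete_graph n)\<^sup>*\<^sup>* u v" if "u < n" "v < n" for u v
    using that by (cases "u = v") (auto simp: complete_graph_def)
  then show ?thesis
    using assms unfolding connected_graph_def simple_graph_def complete_graph_def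
    by (auto simp: lessThan_empty_iff)
qed

lemma degree_complete_graph:
  assumes "u < n"
  shows "Defs.degree {..<n} (complete_graph n) u = n - 1"
proof -
  have "{v \<in> {..<n}. complete_graph n u v} = {..<n} - {u}"
    using assms by (auto simp: complete_graph_def)
  then show ?thesis
    unfolding Defs.degree_def using assms by simp
qed

lemma ABC_spectral_radius_complete_graph:
  assumes "n \<ge> 2"
  shows "ABC_spectral_radius {..<n} (complete_graph n) = sqrt (ABC_bound_sq {..<n} (complete_graph n))"
proof -
  define k where "k = real n - 1"
  define M where "M = ABC_matrix {..<n} (complete_graph n)"
  have k: "k \<ge> 1"
    using assms unfolding k_def by simp
  have conn: "connected_graph {..<n} (complete_graph n)"
    using assms connected_complete_graph by simp
  then have g: "simple_graph {..<n} (complete_graph n)"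
    unfolding connected_graph_def by simp
  have deg: "real (Defs.degree {..<n} (complete_graph n) u) = k" if "u < n" for u
    using degree_complete_graph[OF that] assms unfolding k_def by simp
  have "Defs.degree {..<n} (complete_graph n) ` {..<n} = (\<lambda>_. n - 1) ` {..<n}"
    by (rule image_cong) (simp_all add: degree_complete_graph)
  also have "\<dots> = {n - 1}"
    using assms by (simp add: image_constant_conv lessThan_empty_iff)
  finally have max_deg: "real (max_degree {..<n} (complete_graph n)) = k"
    using assms unfolding max_degree_def k_def by simp
  have "2 * real (num_edges {..<n} (complete_graph n)) = real (\<Sum>u<n. Defs.degree {..<n} (complete_graph n) u)"
    unfolding sum_degree_eq_twice_num_edges[OF g] by simp
  also have "\<dots> = (\<Sum>u<n. real (Defs.degree {..<n} (complete_graph n) u))"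
    by simp
  also have "\<dots> = real n * k"
    using deg by simp
  finally have "2 * real (num_edges {..<n} (complete_graph n)) - real (card {..<n}) + 1 = k * k"
    unfolding k_def by (simp add: algebra_simps)
  then have bound: "ABC_bound_sq {..<n} (complete_graph n) = 2 * k - 2"
    using k by (simp add: ABC_bound_sq_def max_deg)
  have entry: "M i j = (if j = i then 0 else sqrt (2 * k - 2) / k)" if "i < n" "j < n" for i j
  proof (cases "j = i")
    case False
    then have "complete_graph n i j"
      using that unfolding complete_graph_def by simp
    then have "M i j = sqrt ((2 * k - 2) / (k * k))"
      using that deg unfolding M_def ABC_matrix_def by simp
    also have "\<dots> = sqrt (2 * k - 2) / k"
      using k by (simp add: real_sqrt_divide)
    finally show ?thesis
      using False by simp
  qed (simp add: M_def ABC_matrix_def complete_graph_def)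
  have "is_eigenvalue {..<n} M (sqrt (2 * k - 2))"
    unfolding is_eigenvalue_def
  proof (intro exI[of _ "\<lambda>_. 1"] conjI ballI)
    show "\<exists>i\<in>{..<n}. (1::real) \<noteq> 0"
      using assms by (intro bexI[of _ 0]) auto
  next
    fix i assume i: "i \<in> {..<n}"
    have "(\<Sum>j\<in>{..<n}. M i j * 1) = M i i + (\<Sum>j\<in>{..<n} - {i}. M i j)"
      using i by (simp add: sum.remove)
    also have "\<dots> = k * (sqrt (2 * k - 2) / k)"
      using i entry by (simp add: k_def)
    also have "\<dots> = sqrt (2 * k - 2) * 1"
      using k by simp
    finally show "(\<Sum>j\<in>{..<n}. M i j * 1) = sqrt (2 * k - 2) * 1" .
  qed
  then have "sqrt (2 * k - 2) \<le> ABC_spectral_radius {..<n} (complete_graph n)"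
    unfolding ABC_spectral_radius_def M_def using eigenvalues_ABC_matrix(1)[OF g] by simp
  then show ?thesis
    using ABC_spectral_radius_le[OF conn] assms bound by simp
qed

theorem theorem2p1:
  fixes V :: "'a set" and E :: "'a \<Rightarrow> 'a \<Rightarrow> bool"
  assumes "connected_graph V E" and "card V \<ge> 2"
  shows "ABC_spectral_radius V E \<le>
           sqrt (real (max_degree V E)
                 + (2 * real (num_edges V E) - real (card V) + 1) / real (max_degree V E) - 2)
         \<and> (\<exists>(W :: nat set) F. connected_graph W F \<and> card W \<ge> 2 \<and>
              ABC_spectral_radius W F =
              sqrt (real (max_degree W F)
                 + (2 * real (num_edges W F) - real (card W) + 1) / real (max_degree W F) - 2))"
proof -
  have "connected_graph {..<3} (complete_graph 3)"
    and "ABC_spectral_radius {..<3} (complete_graph 3) = sqrt (ABC_bound_sq {..<3} (complete_graph 3))"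
    using connected_complete_graph ABC_spectral_radius_complete_graph by simp_all
  then show ?thesis
    using ABC_spectral_radius_le[OF assms] unfolding ABC_bound_sq_def by force
qed

end
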